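(* Let $\mathbf d=(d_1,\ldots,d_n)$ be a degree sequence and $v\in[n]$ such that $\mathbb P(\mathfrak t_n(v)>0)>0$ (equivalently, $d_w>1$ for some $w\ne v$). Then for every $k\ge2$ with $\mathbb P(\mathfrak s_n(v)=k,\mathfrak t_n(v)>0)>0$, \[\mathbb P\big(\mathfrak t_n(v)=j\,\big|\,\mathfrak s_n(v)=k,\ \mathfrak t_n(v)>0\big)=\frac{1}{k-1},\qquad j\in[k-1].\]
   Context: A degree sequence is $\mathbf d=(d_1,\ldots,d_n)\in\mathbb N_0^n$ with $\sum_j d_j=n$. Let $\mathfrak F(\mathbf d)=\{f:[n]\to[n]: |f^{-1}(\{i\})|=d_i\ \forall i\}$ and $F$ uniform on $\mathfrak F(\mathbf d)$. For $f:V\to V$, $v\in V$: six-length $\mathfrak s_f(v)=\min\{k\in\mathbb N: f^{(k)}(v)\in\{f^{(j)}(v):0\le j\le k-1\}\}$ ($f^{(k)}$ the $k$-fold composition, $f^{(0)}=\mathrm{id}$); tail-length $\mathfrak t_f(v)$ is the unique integer with $0\le\mathfrak t_f(v)<\mathfrak s_f(v)$ and $f^{(\mathfrak s_f(v))}(v)=f^{(\mathfrak t_f(v))}(v)$. $\mathfrak s_n(v)=\mathfrak s_F(v)$, $\mathfrak t_n(v)=\mathfrak t_F(v)$. *)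

theory Defs
  imports "HOL-Probability.Probability"
begin

definition degree_seq :: "nat \<Rightarrow> (nat \<Rightarrow> nat) \<Rightarrow> bool" where
  "degree_seq n d \<longleftrightarrow> (\<Sum>i\<in>{1..n}. d i) = n"

definition Fd :: "nat \<Rightarrow> (nat \<Rightarrow> nat) \<Rightarrow> (nat \<Rightarrow> nat) set" where
  "Fd n d = {f \<in> {1..n} \<rightarrow>\<^sub>E {1..n}. \<forall>i\<in>{1..n}. card {x\<in>{1..n}. f x = i} = d i}"

definition six_len :: "('a \<Rightarrow> 'a) \<Rightarrow> 'a \<Rightarrow> nat" where
  "six_len f v = (LEAST k. k \<ge> 1 \<and> (f ^^ k) v \<in> (\<lambda>j. (f ^^ j) v) ` {0..<k})"

definition tail_len :: "('a \<Rightarrow> 'a) \<Rightarrow> 'a \<Rightarrow> nat" where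
  "tail_len f v = (THE t. t < six_len f v \<and> (f ^^ six_len f v) v = (f ^^ t) v)"

definition Pr :: "nat \<Rightarrow> (nat \<Rightarrow> nat) \<Rightarrow> ((nat \<Rightarrow> nat) \<Rightarrow> bool) \<Rightarrow> real" where
  "Pr n d P = measure_pmf.prob (pmf_of_set (Fd n d)) {f. P f}"

end

theory Submission
  imports Defs "HOL-Combinatorics.Permutations"
begin

text \<open>Write \<open>x\<^sub>i = f\<^sup>i(v)\<close>. Precomposing \<open>f\<close> with the 3-cycle
\<open>x\<^bsub>p-1\<^esub> \<mapsto> x\<^sub>p \<mapsto> x\<^bsub>p+1\<^esub> \<mapsto> x\<^bsub>p-1\<^esub>\<close> keeps every in-degree, and if
\<open>x\<^sub>0, \<dots>, x\<^bsub>k-1\<^esub>\<close> are distinct it yields a map whose orbit of \<open>v\<close> is the old one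
with \<open>x\<^sub>p\<close> and \<open>x\<^bsub>p+1\<^esub>\<close> interchanged. For \<open>1 \<le> p < k - 1\<close> this is an involution on
the maps in \<open>Fd n d\<close> with six-length \<open>k\<close> that exchanges tail-lengths \<open>p\<close> and \<open>p + 1\<close>,
so all tail-lengths \<open>1, \<dots>, k - 1\<close> occur equally often.\<close>

lemma six_len_tail_len_eqI:
  assumes inj: "inj_on (\<lambda>i. (f ^^ i) v) {..<k}"
    and "t < k" and closes: "(f ^^ k) v = (f ^^ t) v"
  shows "six_len f v = k \<and> tail_len f v = t"
proof -
  have six: "six_len f v = k" unfolding six_len_def atLeast0LessThan
  proof (rule Least_equality)
    show "1 \<le> k \<and> (f ^^ k) v \<in> (\<lambda>j. (f ^^ j) v) ` {..<k}" using \<open>t < k\<close> closes by force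
  next
    fix m assume m: "1 \<le> m \<and> (f ^^ m) v \<in> (\<lambda>j. (f ^^ j) v) ` {..<m}"
    then obtain j where "j < m" "(f ^^ m) v = (f ^^ j) v" by auto
    then show "k \<le> m" using inj_onD[OF inj] by (metis lessThan_iff less_trans not_le less_irrefl)
  qed
  have "tail_len f v = t" unfolding tail_len_def six
  proof (rule the_equality)
    fix t' assume "t' < k \<and> (f ^^ k) v = (f ^^ t') v"
    then show "t' = t" using inj_onD[OF inj] closes \<open>t < k\<close> by auto
  qed (use \<open>t < k\<close> closes in blast)
  with six show ?thesis by simp
qed

lemma funpow_in_invariant:
  assumes "f ` S \<subseteq> S" "v \<in> S"
  shows "(f ^^ i) v \<in> S"
  using assms by (induction i) auto

lemma funpow_orbit_closes:
  assumes "finite S" "f ` S \<subseteq> S" "v \<in> S"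
  obtains k t where "inj_on (\<lambda>i. (f ^^ i) v) {..<k}" "t < k" "(f ^^ k) v = (f ^^ t) v"
proof -
  let ?x = "\<lambda>i. (f ^^ i) v"
  have "\<not> inj_on ?x {..card S}"
  proof
    assume "inj_on ?x {..card S}"
    then have "card (?x ` {..card S}) = Suc (card S)" by (simp add: card_image)
    moreover have "card (?x ` {..card S}) \<le> card S" using funpow_in_invariant[OF assms(2,3)]
      by (intro card_mono assms(1)) auto
    ultimately show False by simp
  qed
  then have ex: "\<exists>k. \<not> inj_on ?x {..k}" by blast
  define k where "k = (LEAST k. \<not> inj_on ?x {..k})"
  have not_inj: "\<not> inj_on ?x (insert k {..<k})"
    using LeastI_ex[OF ex] unfolding k_def by (simp add: lessThan_Suc_atMost[symmetric] lessThan_Suc)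
  have "inj_on ?x {..<k}"
  proof (cases k)
    case (Suc m)
    then have "inj_on ?x {..m}"
      using not_less_Least[of m "\<lambda>k. \<not> inj_on ?x {..k}"] unfolding k_def by simp
    then show ?thesis using Suc by (simp add: lessThan_Suc_atMost)
  qed simp
  moreover obtain t where "t < k" "?x k = ?x t"
    using not_inj \<open>inj_on ?x {..<k}\<close> by auto
  ultimately show thesis by (rule that)
qed

lemma six_len_tail_len_iff:
  assumes "finite S" "f ` S \<subseteq> S" "v \<in> S"
  shows "six_len f v = k \<and> tail_len f v = t \<longleftrightarrow>
    inj_on (\<lambda>i. (f ^^ i) v) {..<k} \<and> t < k \<and> (f ^^ k) v = (f ^^ t) v"
  by (metis funpow_orbit_closes[OF assms] six_len_tail_len_eqI)

lemma tail_len_less_six_len: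
  assumes "finite S" "f ` S \<subseteq> S" "v \<in> S"
  shows "tail_len f v < six_len f v"
  using six_len_tail_len_iff[OF assms, of "six_len f v" "tail_len f v"] by simp

lemma Fd_image_subset: "f \<in> Fd n d \<Longrightarrow> f ` {1..n} \<subseteq> {1..n}"
  unfolding Fd_def by auto

lemma finite_Fd: "finite (Fd n d)"
  by (rule finite_subset[of _ "{1..n} \<rightarrow>\<^sub>E {1..n}"]) (auto simp: Fd_def finite_PiE)

lemma ex_map_with_fiber_cards:
  assumes "finite A" "finite B" "card A = (\<Sum>i\<in>B. d i)"
  shows "\<exists>g. g ` A \<subseteq> B \<and> (\<forall>i\<in>B. card {x\<in>A. g x = i} = d i)"
  using assms(2,1,3)
proof (induction B arbitrary: A rule: finite_induct)
  case (insert b B)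
  then obtain S where S: "S \<subseteq> A" "card S = d b"
    by (metis obtain_subset_with_card_n le_add1 sum.insert)
  with insert.prems have "finite (A - S)" "card (A - S) = (\<Sum>i\<in>B. d i)"
    by (simp_all add: card_Diff_subset finite_subset insert.hyps)
  then obtain g where g: "g ` (A - S) \<subseteq> B" "\<forall>i\<in>B. card {x\<in>A - S. g x = i} = d i"
    using insert.IH by blast
  define g' where "g' x = (if x \<in> S then b else g x)" for x
  have "card {x\<in>A. g' x = i} = d i" if "i \<in> insert b B" for i
  proof (cases "i = b")
    case True
    then have "{x\<in>A. g' x = i} = S" using S(1) g(1) insert.hyps(2) by (auto simp: g'_def)
    then show ?thesis using S(2) True by simp
  next
    case False
    then have "{x\<in>A. g' x = i} = {x\<in>A - S. g x = i}" by (auto simp: g'_def)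
    then show ?thesis using g(2) that False by simp
  qed
  moreover have "g' ` A \<subseteq> insert b B" using g(1) by (auto simp: g'_def)
  ultimately show ?case by blast
qed simp

lemma Fd_nonempty:
  assumes "degree_seq n d"
  shows "Fd n d \<noteq> {}"
proof -
  obtain g where g: "g ` {1..n} \<subseteq> {1..n}" "\<forall>i\<in>{1..n}. card {x\<in>{1..n}. g x = i} = d i"
    using ex_map_with_fiber_cards[of "{1..n}" "{1..n}" d] assms by (auto simp: degree_seq_def)
  have "restrict g {1..n} \<in> {1..n} \<rightarrow>\<^sub>E {1..n}" using g(1) by auto
  moreover have "{x\<in>{1..n}. restrict g {1..n} x = i} = {x\<in>{1..n}. g x = i}" for i by auto
  ultimately have "restrict g {1..n} \<in> Fd n d" using g(2) unfolding Fd_def by simp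
  then show ?thesis by blast
qed

lemma Pr_eq_card:
  assumes "degree_seq n d"
  shows "Pr n d P = card {f \<in> Fd n d. P f} / card (Fd n d)"
  using measure_pmf_of_set[OF Fd_nonempty[OF assms] finite_Fd, of "{f. P f}"]
  by (simp add: Pr_def Int_def)

lemma card_fiber_comp_permutes:
  assumes "r permutes S"
  shows "card {z\<in>S. f (r z) = i} = card {z\<in>S. f z = i}"
proof (rule bij_betw_same_card)
  show "bij_betw r {z\<in>S. f (r z) = i} {z\<in>S. f z = i}"
  proof (rule bij_betw_subset[OF permutes_imp_bij[OF assms]])
    show "r ` {z\<in>S. f (r z) = i} = {z\<in>S. f z = i}"
      using assms by (auto simp: permutes_in_image image_iff)
        (metis permutes_inverses(1) permutes_in_image permutes_inv)
  qed auto
qed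

lemma comp_permutes_in_Fd:
  assumes "f \<in> Fd n d" "r permutes {1..n}"
  shows "f \<circ> r \<in> Fd n d"
proof -
  have f: "f \<in> {1..n} \<rightarrow>\<^sub>E {1..n}" using assms(1) by (simp add: Fd_def)
  have "f \<circ> r \<in> {1..n} \<rightarrow>\<^sub>E {1..n}"
  proof (rule PiE_I)
    show "(f \<circ> r) x \<in> {1..n}" if "x \<in> {1..n}" for x
      using PiE_mem[OF f] permutes_in_image[OF assms(2)] that by simp
    show "(f \<circ> r) x = undefined" if "x \<notin> {1..n}" for x
      using PiE_arb[OF f that] permutes_not_in[OF assms(2) that] by simp
  qed
  then show ?thesis
    using assms card_fiber_comp_permutes[OF assms(2), of f] by (simp add: Fd_def)
qed

lemma funpow_triple_distinct:
  assumes "inj_on (\<lambda>i. (f ^^ i) v) {..<k}" "1 \<le> p" "Suc p < k"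
  shows "distinct [(f ^^ (p - 1)) v, (f ^^ p) v, (f ^^ Suc p) v]"
proof -
  have "(f ^^ i) v \<noteq> (f ^^ j) v" if "i < k" "j < k" "i \<noteq> j" for i j
    using inj_onD[OF assms(1)] that by blast
  then show ?thesis using assms(2,3) by (simp del: funpow.simps)
qed

definition orbit_swap :: "'a \<Rightarrow> nat \<Rightarrow> ('a \<Rightarrow> 'a) \<Rightarrow> 'a \<Rightarrow> 'a" where
  "orbit_swap v p f =
     f \<circ> Transposition.transpose ((f ^^ (p - 1)) v) ((f ^^ p) v)
       \<circ> Transposition.transpose ((f ^^ p) v) ((f ^^ Suc p) v)"

lemma orbit_swap_eq_comp_permutes:
  assumes "f ` S \<subseteq> S" "v \<in> S"
  obtains r where "r permutes S" "orbit_swap v p f = f \<circ> r"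
proof
  show "Transposition.transpose ((f ^^ (p - 1)) v) ((f ^^ p) v) \<circ>
      Transposition.transpose ((f ^^ p) v) ((f ^^ Suc p) v) permutes S"
    using funpow_in_invariant[OF assms] by (intro permutes_compose permutes_swap_id)
qed (simp add: orbit_swap_def comp_assoc)

lemma funpow_orbit_swap:
  assumes inj: "inj_on (\<lambda>i. (f ^^ i) v) {..<k}" and p: "1 \<le> p" "Suc p < k"
  shows "i \<le> k \<Longrightarrow> (orbit_swap v p f ^^ i) v = (f ^^ Transposition.transpose p (Suc p) i) v"
proof (induction i)
  case 0
  then show ?case using p by simp
next
  case (Suc i)
  let ?x = "\<lambda>i. (f ^^ i) v" and ?\<tau> = "Transposition.transpose p (Suc p)"
  have ab: "?x (p - 1) \<noteq> ?x p" and bc: "?x p \<noteq> ?x (Suc p)" and ac: "?x (p - 1) \<noteq> ?x (Suc p)"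
    using funpow_triple_distinct[OF inj p] by (simp_all del: funpow.simps)
  have "(orbit_swap v p f ^^ Suc i) v = orbit_swap v p f (?x (?\<tau> i))"
    using Suc by simp
  also have "\<dots> = f (Transposition.transpose (?x (p - 1)) (?x p)
      (Transposition.transpose (?x p) (?x (Suc p)) (?x (?\<tau> i))))"
    by (simp only: orbit_swap_def comp_apply)
  also have "\<dots> = ?x (?\<tau> (Suc i))"
  proof -
    consider "i = p - 1" | "i = p" | "i = Suc p" | "i \<notin> {p - 1, p, Suc p}" by blast
    then show ?thesis
    proof cases
      case 1
      then have "?\<tau> i = p - 1" "?\<tau> (Suc i) = Suc p"
        using p by (auto simp: Transposition.transpose_def)
      then show ?thesis using ab ac by simp
    next
      case 2
      then have "?\<tau> i = Suc p" "?\<tau> (Suc i) = p" "Suc (p - 1) = p"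
        using p by (auto simp: Transposition.transpose_def)
      then show ?thesis using ab ac bc by (metis funpow.simps(2) comp_apply transpose_apply_second)
    next
      case 3
      then have "?\<tau> i = p" "?\<tau> (Suc i) = Suc (Suc p)"
        by (auto simp: Transposition.transpose_def)
      then show ?thesis using ab ac bc by simp
    next
      case 4
      have neq: "?x i \<noteq> ?x j" if "j \<in> {p - 1, p, Suc p}" for j
      proof
        assume "?x i = ?x j"
        moreover have "i < k" "j < k" "i \<noteq> j" using 4 Suc.prems p that by auto
        ultimately show False using inj_onD[OF inj] by blast
      qed
      have "?\<tau> i = i" "?\<tau> (Suc i) = Suc i"
        using 4 p by (auto simp: Transposition.transpose_def)
      then show ?thesis using neq[of "p - 1"] neq[of p] neq[of "Suc p"] by simp
    qed
  qed
  finally show ?case .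
qed

lemma orbit_swap_orbit_swap:
  assumes inj: "inj_on (\<lambda>i. (f ^^ i) v) {..<k}" and p: "1 \<le> p" "Suc p < k"
  shows "orbit_swap v p (orbit_swap v p f) = f"
proof -
  let ?x = "\<lambda>i. (f ^^ i) v" and ?g = "orbit_swap v p f"
  have ab: "?x (p - 1) \<noteq> ?x p" and bc: "?x p \<noteq> ?x (Suc p)" and ac: "?x (p - 1) \<noteq> ?x (Suc p)"
    using funpow_triple_distinct[OF inj p] by (simp_all del: funpow.simps)
  have "p - 1 \<noteq> p" "p - 1 \<noteq> Suc p" using p by auto
  then have "(?g ^^ (p - 1)) v = ?x (p - 1)" "(?g ^^ p) v = ?x (Suc p)" "(?g ^^ Suc p) v = ?x p"
    using p(2) funpow_orbit_swap[OF inj p, of "p - 1"] funpow_orbit_swap[OF inj p, of p]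
      funpow_orbit_swap[OF inj p, of "Suc p"]
    by (simp_all add: Transposition.transpose_def del: funpow.simps)
  then have "orbit_swap v p ?g = ?g \<circ> Transposition.transpose (?x (p - 1)) (?x (Suc p))
      \<circ> Transposition.transpose (?x (Suc p)) (?x p)"
    unfolding orbit_swap_def[of v p ?g] by (simp del: funpow.simps)
  also have "\<dots> = f"
    using ab bc ac by (auto simp: fun_eq_iff orbit_swap_def Transposition.transpose_def)
  finally show ?thesis .
qed

lemma orbit_swap_six_len_tail_len:
  assumes S: "finite S" "f ` S \<subseteq> S" "v \<in> S"
    and "six_len f v = k" "tail_len f v = t" and p: "1 \<le> p" "Suc p < k"
  shows "six_len (orbit_swap v p f) v = k \<and>
    tail_len (orbit_swap v p f) v = Transposition.transpose p (Suc p) t"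
proof -
  let ?x = "\<lambda>i. (f ^^ i) v" and ?g = "orbit_swap v p f"
    and ?\<tau> = "Transposition.transpose p (Suc p)"
  have inj: "inj_on ?x {..<k}" and "t < k" and closes: "?x k = ?x t"
    using assms six_len_tail_len_iff[OF S] by blast+
  obtain r where r: "r permutes S" "?g = f \<circ> r"
    by (rule orbit_swap_eq_comp_permutes[OF S(2,3)])
  have g_S: "?g ` S \<subseteq> S"
    unfolding r(2) image_comp[symmetric] permutes_image[OF r(1)] by (rule S(2))
  have orbit: "(?g ^^ i) v = ?x (?\<tau> i)" if "i \<le> k" for i
    using funpow_orbit_swap[OF inj p that] .
  have \<tau>_less: "?\<tau> i < k" if "i < k" for i
    using that p by (auto simp: Transposition.transpose_def)
  have "inj_on (\<lambda>i. (?g ^^ i) v) {..<k}"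
  proof (rule inj_onI)
    fix i j assume "i \<in> {..<k}" "j \<in> {..<k}" "(?g ^^ i) v = (?g ^^ j) v"
    then have "?\<tau> i = ?\<tau> j" using orbit \<tau>_less inj_onD[OF inj] by simp
    then show "i = j" by (rule transpose_eq_imp_eq)
  qed
  moreover have "(?g ^^ k) v = (?g ^^ ?\<tau> t) v"
    using orbit p closes \<tau>_less[OF \<open>t < k\<close>] by (simp add: Transposition.transpose_def)
  ultimately show ?thesis
    using six_len_tail_len_iff[OF S(1) g_S S(3)] \<tau>_less[OF \<open>t < k\<close>] by blast
qed

lemma orbit_swap_in_Fd:
  assumes "f \<in> Fd n d" "v \<in> {1..n}"
  shows "orbit_swap v p f \<in> Fd n d"
proof -
  obtain r where "r permutes {1..n}" "orbit_swap v p f = f \<circ> r"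
    by (rule orbit_swap_eq_comp_permutes[OF Fd_image_subset[OF assms(1)] assms(2)])
  then show ?thesis using comp_permutes_in_Fd[OF assms(1)] by simp
qed

definition rho_class :: "nat \<Rightarrow> (nat \<Rightarrow> nat) \<Rightarrow> nat \<Rightarrow> nat \<Rightarrow> nat \<Rightarrow> (nat \<Rightarrow> nat) set" where
  "rho_class n d v k t = {f \<in> Fd n d. six_len f v = k \<and> tail_len f v = t}"

lemma orbit_swap_rho_class:
  assumes "f \<in> rho_class n d v k t" "v \<in> {1..n}" "1 \<le> p" "Suc p < k"
  shows "orbit_swap v p f \<in> rho_class n d v k (Transposition.transpose p (Suc p) t)"
    and "orbit_swap v p (orbit_swap v p f) = f"
proof -
  have F: "f \<in> Fd n d" and shape: "six_len f v = k" "tail_len f v = t"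
    using assms(1) by (simp_all add: rho_class_def)
  have "six_len (orbit_swap v p f) v = k \<and>
      tail_len (orbit_swap v p f) v = Transposition.transpose p (Suc p) t"
    by (rule orbit_swap_six_len_tail_len[OF finite_atLeastAtMost Fd_image_subset[OF F] assms(2)
        shape assms(3,4)])
  with orbit_swap_in_Fd[OF F assms(2)]
  show "orbit_swap v p f \<in> rho_class n d v k (Transposition.transpose p (Suc p) t)"
    unfolding rho_class_def by blast
  have "inj_on (\<lambda>i. (f ^^ i) v) {..<k}"
    using six_len_tail_len_iff[OF finite_atLeastAtMost Fd_image_subset[OF F] assms(2), of k t] shape
    by simp
  then show "orbit_swap v p (orbit_swap v p f) = f"
    by (rule orbit_swap_orbit_swap[OF _ assms(3,4)])
qed

lemma card_rho_class_Suc: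
  assumes "v \<in> {1..n}" "1 \<le> p" "Suc p < k"
  shows "card (rho_class n d v k (Suc p)) = card (rho_class n d v k p)"
proof (rule sym, rule bij_betw_same_card)
  show "bij_betw (orbit_swap v p) (rho_class n d v k p) (rho_class n d v k (Suc p))"
  proof (rule bij_betw_byWitness[where f' = "orbit_swap v p"])
    have "Transposition.transpose p (Suc p) p = Suc p"
      and "Transposition.transpose p (Suc p) (Suc p) = p"
      by simp_all
    then show "orbit_swap v p ` rho_class n d v k p \<subseteq> rho_class n d v k (Suc p)"
      and "orbit_swap v p ` rho_class n d v k (Suc p) \<subseteq> rho_class n d v k p"
      using orbit_swap_rho_class(1)[OF _ assms] by (metis image_subsetI)+
  qed (use orbit_swap_rho_class(2)[OF _ assms] in blast)+
qed

lemma card_rho_class_eq: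
  assumes "v \<in> {1..n}" "1 \<le> j" "j < k"
  shows "card (rho_class n d v k j) = card (rho_class n d v k 1)"
  using assms(2,3)
proof (induction j rule: dec_induct)
  case (step p)
  then have "card (rho_class n d v k (Suc p)) = card (rho_class n d v k p)"
    by (intro card_rho_class_Suc[OF assms(1)]) auto
  with step show ?case by simp
qed simp

lemma card_six_len_tail_pos:
  assumes "v \<in> {1..n}"
  shows "card {f \<in> Fd n d. six_len f v = k \<and> tail_len f v > 0}
    = (k - 1) * card (rho_class n d v k 1)"
proof -
  have "{f \<in> Fd n d. six_len f v = k \<and> tail_len f v > 0}
      = (\<Union>t\<in>{1..<k}. rho_class n d v k t)"
    using tail_len_less_six_len[OF finite_atLeastAtMost Fd_image_subset assms]
    by (auto simp: rho_class_def Suc_le_eq)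
  also have "card \<dots> = (\<Sum>t\<in>{1..<k}. card (rho_class n d v k t))"
    by (rule card_UN_disjoint) (auto simp: rho_class_def finite_Fd)
  also have "\<dots> = (\<Sum>t\<in>{1..<k}. card (rho_class n d v k 1))"
    by (intro sum.cong refl card_rho_class_eq[OF assms]) auto
  finally show ?thesis by simp
qed

theorem lemma3p12:
  fixes n :: nat and d :: "nat \<Rightarrow> nat" and v k j :: nat
  assumes "degree_seq n d"
    and "v \<in> {1..n}"
    and "Pr n d (\<lambda>f. tail_len f v > 0) > 0"
    and "k \<ge> 2"
    and "Pr n d (\<lambda>f. six_len f v = k \<and> tail_len f v > 0) > 0"
    and "j \<in> {1..k-1}"
  shows "Pr n d (\<lambda>f. tail_len f v = j \<and> six_len f v = k \<and> tail_len f v > 0)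
           / Pr n d (\<lambda>f. six_len f v = k \<and> tail_len f v > 0) = 1 / real (k - 1)"
proof -
  let ?c = "real (card (rho_class n d v k 1))" and ?N = "real (card (Fd n d))"
  have j: "1 \<le> j" "j < k" using assms(4,6) by auto
  have "{f \<in> Fd n d. tail_len f v = j \<and> six_len f v = k \<and> tail_len f v > 0}
      = rho_class n d v k j"
    using j by (auto simp: rho_class_def)
  then have num: "Pr n d (\<lambda>f. tail_len f v = j \<and> six_len f v = k \<and> tail_len f v > 0) = ?c / ?N"
    using card_rho_class_eq[OF assms(2) j] by (simp add: Pr_eq_card[OF assms(1)])
  have den: "Pr n d (\<lambda>f. six_len f v = k \<and> tail_len f v > 0) = real (k - 1) * ?c / ?N"
    by (simp add: Pr_eq_card[OF assms(1)] card_six_len_tail_pos[OF assms(2)])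
  have "real (k - 1) * ?c / ?N \<noteq> 0"
    using assms(5) unfolding den by linarith
  then have "?c \<noteq> 0" "?N \<noteq> 0" "real (k - 1) \<noteq> 0"
    by auto
  then show ?thesis
    unfolding num den by (simp add: field_simps)
qed

end
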